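(* Let $k\geq2$ be even, $n>2\ell'_k$, and $p\in\{0,1,2\}^{[\![1,n]\!]^2}$. Let $K^A(p,\ell'_k)=\{v\in J^A(p,\ell'_k):p(v)=0\}$ and $K^B(p,\ell'_k)=\{v\in J^B(p,\ell'_k):p(v)=0\}$. Then (1) $\mathrm{card}(K^B(p,\ell'_k))\leq(1-N_{k-1}^{-1})^{-1}\,\mathrm{card}(J^B(p,\ell'_k))\,f^B_{k-1}$; (2) $\mathrm{card}(K^A(p,\ell'_k))\leq\frac{2}{N'_k}\,\mathrm{card}(J^A(p,\ell'_k))\,f^A_{k-1}$.
   Context: Alphabet $\{0,1,2\}$. Let $(N_k)_{k\geq1}$ be integers with $N_k\geq4$, $\ell_0=2$, $\ell_k=N_k\ell_{k-1}$; let $N'_k\geq2$ be integers dividing $N_k$ with $N_k/N'_k\geq2$, and $\ell'_k=N'_k\ell_{k-1}$. Words: $a_0=01$, $b_0=02$; for odd $k\geq1$, $a_k=(a_{k-1})^{N_k}$ and $b_k=b_{k-1}2^{(N_k-2)\ell_{k-1}}b_{k-1}$; for even $k\geq2$, $a_k=a_{k-1}1^{(N_k-2)\ell_{k-1}}a_{k-1}$ and $b_k=(b_{k-1})^{N_k}$. $f^A_k$ (resp. $f^B_k$) is the number of occurrences of the symbol $0$ in $a_k$ (resp. $b_k$) divided by $\ell_k$. For even $k$: $\widetilde A'_k=\{a_{k-1}1^{(N'_k-1)\ell_{k-1}},\,1^{(N'_k-1)\ell_{k-1}}a_{k-1},\,1^{\ell'_k}\}$ and $\widetilde B'_k=\{(b_{k-1})^{N'_k},2^{\ell'_k}\}$.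 $\widetilde{\widetilde A}'_k$ (resp. $\widetilde{\widetilde B}'_k$) is the set of patterns $q\in\{0,1,2\}^{[\![1,\ell'_k]\!]^2}$ with $q(i,j)=\widetilde q(i)$ for all $(i,j)$, for some $\widetilde q\in\widetilde A'_k$ (resp. $\widetilde B'_k$). With $\sigma^u(p)(v)=p(u+v)$: $I^A(p,\ell'_k)=\{u\in[\![0,n-\ell'_k]\!]^2:(\sigma^up)|_{[\![1,\ell'_k]\!]^2}\in\widetilde{\widetilde A}'_k\}$, $J^A(p,\ell'_k)=\bigcup_{u\in I^A(p,\ell'_k)}(u+[\![1,\ell'_k]\!]^2)$, and $I^B,J^B$ analogously with $\widetilde{\widetilde B}'_k$. *)

theory Defs
  imports Complex_Main
begin

text \<open>Words over the alphabet {0,1,2} are lists of naturals; patterns on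
  [1,n]^2 are functions nat \<times> nat \<Rightarrow> nat (only values on the square matter).\<close>

fun ell :: "(nat \<Rightarrow> nat) \<Rightarrow> nat \<Rightarrow> nat" where
  "ell N 0 = 2"
| "ell N (Suc k) = N (Suc k) * ell N k"

definition ell' :: "(nat \<Rightarrow> nat) \<Rightarrow> (nat \<Rightarrow> nat) \<Rightarrow> nat \<Rightarrow> nat" where
  "ell' N N' k = N' k * ell N (k - 1)"

fun ab :: "(nat \<Rightarrow> nat) \<Rightarrow> nat \<Rightarrow> nat list \<times> nat list" where
  "ab N 0 = ([0,1], [0,2])"
| "ab N (Suc k) =
     (let a = fst (ab N k); b = snd (ab N k) in
      if odd (Suc k)
      then (concat (replicate (N (Suc k)) a),
            b @ replicate ((N (Suc k) - 2) * ell N k) 2 @ b)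
      else (a @ replicate ((N (Suc k) - 2) * ell N k) 1 @ a,
            concat (replicate (N (Suc k)) b)))"

definition aw :: "(nat \<Rightarrow> nat) \<Rightarrow> nat \<Rightarrow> nat list" where
  "aw N k = fst (ab N k)"

definition bw :: "(nat \<Rightarrow> nat) \<Rightarrow> nat \<Rightarrow> nat list" where
  "bw N k = snd (ab N k)"

definition fA :: "(nat \<Rightarrow> nat) \<Rightarrow> nat \<Rightarrow> real" where
  "fA N k = real (count_list (aw N k) 0) / real (ell N k)"

definition fB :: "(nat \<Rightarrow> nat) \<Rightarrow> nat \<Rightarrow> real" where
  "fB N k = real (count_list (bw N k) 0) / real (ell N k)"

definition At' :: "(nat \<Rightarrow> nat) \<Rightarrow> (nat \<Rightarrow> nat) \<Rightarrow> nat \<Rightarrow> nat list set" where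
  "At' N N' k = {aw N (k-1) @ replicate ((N' k - 1) * ell N (k-1)) 1,
                 replicate ((N' k - 1) * ell N (k-1)) 1 @ aw N (k-1),
                 replicate (ell' N N' k) 1}"

definition Bt' :: "(nat \<Rightarrow> nat) \<Rightarrow> (nat \<Rightarrow> nat) \<Rightarrow> nat \<Rightarrow> nat list set" where
  "Bt' N N' k = {concat (replicate (N' k) (bw N (k-1))), replicate (ell' N N' k) 2}"

definition lift2 :: "nat list set \<Rightarrow> nat \<Rightarrow> ((nat \<times> nat) \<Rightarrow> nat) set" where
  "lift2 W L = {q. \<exists>w\<in>W. \<forall>i\<in>{1..L}. \<forall>j\<in>{1..L}. q (i,j) = w ! (i - 1)}"

definition Iset :: "((nat \<times> nat) \<Rightarrow> nat) set \<Rightarrow> nat \<Rightarrow> ((nat \<times> nat) \<Rightarrow> nat) \<Rightarrow> nat \<Rightarrow> (nat \<times> nat) set" where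
  "Iset Q n p L = {u \<in> {0..n-L} \<times> {0..n-L}.
      \<exists>q\<in>Q. \<forall>i\<in>{1..L}. \<forall>j\<in>{1..L}. p (fst u + i, snd u + j) = q (i,j)}"

definition Jset :: "((nat \<times> nat) \<Rightarrow> nat) set \<Rightarrow> nat \<Rightarrow> ((nat \<times> nat) \<Rightarrow> nat) \<Rightarrow> nat \<Rightarrow> (nat \<times> nat) set" where
  "Jset Q n p L = (\<Union>u\<in>Iset Q n p L. {(fst u + i, snd u + j) | i j. i \<in> {1..L} \<and> j \<in> {1..L}})"

definition JA where "JA N N' k n p = Jset (lift2 (At' N N' k) (ell' N N' k)) n p (ell' N N' k)"
definition JB where "JB N N' k n p = Jset (lift2 (Bt' N N' k) (ell' N N' k)) n p (ell' N N' k)"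

definition KA where "KA N N' k n p = {v \<in> JA N N' k n p. p v = 0}"
definition KB where "KB N N' k n p = {v \<in> JB N N' k n p. p v = 0}"

end

theory Submission
  imports Defs
begin

text \<open>Both bounds are proved row by row. On a fixed row, J is a union of windows
  [t+1, t+L] with L = l'_k, one for each placed pattern, and on each window p spells a word
  of the pattern set. For A every such word has at most c zeros, c the number of zeros of
  a_{k-1}; removing the last window together with all windows overlapping it (these lie in
  two windows) loses at least L points of the row but at most 2c zeros, whence the factor
  2/N'_k. For B the windows spelling 2^L carry no zeros, and the others split into copies of
  b_{k-1} = b_{k-2} 2^M b_{k-2}. As b_{k-2} starts with 0 and the run of 2's is longer than
  b_{k-2}, two copies are at distance at least l_{k-1} - l_{k-2}; removing the last copy
  loses at least that many points and at most c zeros, whence the factor (1 - 1/N_{k-1})^{-1}.\<close>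

lemma ell_pos:
  assumes "\<forall>m\<ge>1. 1 \<le> N m"
  shows "0 < ell N k"
proof (induction k)
  case (Suc k)
  then show ?case using assms[rule_format, of "Suc k"] by simp
qed simp

lemma length_aw_bw:
  assumes "\<forall>m\<ge>1. 2 \<le> N m"
  shows "length (aw N k) = ell N k \<and> length (bw N k) = ell N k"
proof (induction k)
  case (Suc k)
  have "2 \<le> N (Suc k)" using assms by simp
  then obtain r where "N (Suc k) = 2 + r" by (auto dest: le_Suc_ex)
  with Suc show ?case
    by (simp add: aw_def bw_def Let_def length_concat sum_list_replicate)
qed (simp add: aw_def bw_def)

lemma bw_not_Nil_nth_0:
  assumes "\<forall>m\<ge>1. 1 \<le> N m"
  shows "bw N k \<noteq> [] \<and> bw N k ! 0 = 0"
proof (induction k)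
  case (Suc k)
  have "1 \<le> N (Suc k)" using assms by simp
  then obtain r where "N (Suc k) = 1 + r" by (auto dest: le_Suc_ex)
  with Suc show ?case by (simp add: bw_def Let_def nth_append)
qed (simp add: bw_def)

lemma bw_Suc_odd:
  "odd (Suc k) \<Longrightarrow> bw N (Suc k) = bw N k @ replicate ((N (Suc k) - 2) * ell N k) 2 @ bw N k"
  by (simp add: bw_def Let_def)

definition occurs_at :: "(nat \<Rightarrow> 'a) \<Rightarrow> nat \<Rightarrow> 'a list \<Rightarrow> bool" where
  "occurs_at f t w \<longleftrightarrow> (\<forall>i<length w. f (t + Suc i) = w ! i)"

lemma count_list_eq_card: "count_list w a = card {i. i < length w \<and> w ! i = a}"
  by (simp add: count_list_eq_length_filter length_filter_conv_card eq_commute)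

lemma card_occurs_at:
  assumes "occurs_at f t w"
  shows "card ({x. f x = a} \<inter> {t+1..t + length w}) = count_list w a"
proof -
  have "{x. f x = a} \<inter> {t+1..t + length w} = (\<lambda>i. t + Suc i) ` {i. i < length w \<and> w ! i = a}"
  proof (intro equalityI subsetI)
    fix x assume x: "x \<in> {x. f x = a} \<inter> {t+1..t + length w}"
    then have i: "x = t + Suc (x - t - 1)" "x - t - 1 < length w" by auto
    then have "w ! (x - t - 1) = a" using x assms unfolding occurs_at_def by force
    with i show "x \<in> (\<lambda>i. t + Suc i) ` {i. i < length w \<and> w ! i = a}" by blast
  qed (use assms in \<open>auto simp: occurs_at_def\<close>)
  then show ?thesis
    by (simp add: card_image inj_on_def count_list_eq_card)
qed

lemma nth_concat_replicate:
  "i < length w \<Longrightarrow> j < m \<Longrightarrow> concat (replicate m w) ! (j * length w + i) = w ! i"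
proof (induction m arbitrary: j)
  case (Suc m)
  show ?case
  proof (cases j)
    case 0
    then show ?thesis using Suc by (simp add: nth_append)
  next
    case (Suc j')
    then show ?thesis using Suc.prems Suc.IH[of j'] by (simp add: nth_append add.assoc)
  qed
qed simp

lemma occurs_at_concat_replicate:
  assumes "occurs_at f t (concat (replicate m w))" "j < m"
  shows "occurs_at f (t + j * length w) w"
  unfolding occurs_at_def
proof (intro allI impI)
  fix i assume i: "i < length w"
  have "j * length w + length w \<le> m * length w"
    using assms(2) by (metis Suc_leI add.commute mult_Suc mult_le_mono1)
  then have "j * length w + i < length (concat (replicate m w))"
    using i by (simp add: length_concat sum_list_replicate)
  then have "f (t + Suc (j * length w + i)) = concat (replicate m w) ! (j * length w + i)"
    using assms(1) unfolding occurs_at_def by blast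
  also have "\<dots> = w ! i"
    using i assms(2) by (rule nth_concat_replicate)
  finally show "f (t + j * length w + Suc i) = w ! i"
    by (simp add: add.assoc)
qed

text \<open>A shift by at most M moves the first letter of the second copy of xs onto the
  run of a's; a longer shift moves the run onto the first letter of the first copy.\<close>

lemma padded_word_not_periodic:
  fixes xs :: "'a list"
  assumes "xs \<noteq> []" "xs ! 0 \<noteq> a" "length xs \<le> M" "0 < d" "d < length xs + M"
  defines "b \<equiv> xs @ replicate M a @ xs"
  shows "\<exists>i. i + d < length b \<and> b ! i \<noteq> b ! (i + d)"
proof (cases "d \<le> M")
  case True
  let ?i = "length xs + M - d"
  have "b ! ?i = a" "b ! (?i + d) = xs ! 0" "?i + d < length b"
    using True assms by (simp_all add: b_def nth_append)
  then show ?thesis using assms(2) by (intro exI[of _ ?i]) simp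
next
  case False
  have "b ! 0 = xs ! 0" "b ! d = a" "0 + d < length b"
    using False assms by (simp_all add: b_def nth_append)
  then show ?thesis using assms(2) by (intro exI[of _ 0]) simp
qed

lemma occurs_at_padded_separated:
  fixes xs :: "'a list"
  assumes "occurs_at f t (xs @ replicate M a @ xs)" "occurs_at f t' (xs @ replicate M a @ xs)" "t < t'"
    and "xs \<noteq> []" "xs ! 0 \<noteq> a" "length xs \<le> M"
  shows "t + (length xs + M) \<le> t'"
proof (rule ccontr)
  let ?b = "xs @ replicate M a @ xs" and ?d = "t' - t"
  assume "\<not> t + (length xs + M) \<le> t'"
  then have "0 < ?d" "?d < length xs + M" using assms(3) by auto
  then obtain i where i: "i + ?d < length ?b" "?b ! i \<noteq> ?b ! (i + ?d)"
    using padded_word_not_periodic[OF assms(4-6)] by blast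
  have "f (t + Suc (i + ?d)) = ?b ! (i + ?d)" using assms(1) i(1) unfolding occurs_at_def by blast
  moreover have "f (t' + Suc i) = ?b ! i" using assms(2) i(1) unfolding occurs_at_def by simp
  moreover have "t + Suc (i + ?d) = t' + Suc i" using assms(3) by simp
  ultimately show False using i(2) by metis
qed

lemma card_Int_UN_intervals_window:
  fixes R Z :: "nat set"
  assumes "finite R" "R \<noteq> {}" "\<forall>t\<in>R. Max R < t + L" "\<forall>t\<in>R. card (Z \<inter> {t+1..t+L}) \<le> c"
  shows "card (Z \<inter> (\<Union>t\<in>R. {t+1..t+L})) \<le> 2 * c"
proof -
  let ?m = "Min R" and ?s = "Max R"
  have "(\<Union>t\<in>R. {t+1..t+L}) \<subseteq> {?m+1..?m+L} \<union> {?s+1..?s+L}"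
  proof
    fix x assume "x \<in> (\<Union>t\<in>R. {t+1..t+L})"
    then obtain t where "t \<in> R" "x \<in> {t+1..t+L}" by blast
    moreover have "?m \<le> t" "t \<le> ?s" "?s < ?m + L"
      using \<open>t \<in> R\<close> assms(1-3) by auto
    ultimately show "x \<in> {?m+1..?m+L} \<union> {?s+1..?s+L}" by auto
  qed
  then have "card (Z \<inter> (\<Union>t\<in>R. {t+1..t+L})) \<le> card (Z \<inter> {?m+1..?m+L} \<union> Z \<inter> {?s+1..?s+L})"
    by (intro card_mono) auto
  also have "\<dots> \<le> card (Z \<inter> {?m+1..?m+L}) + card (Z \<inter> {?s+1..?s+L})"
    by (rule card_Un_le)
  also have "\<dots> \<le> 2 * c"
    using assms(4)[rule_format, OF Min_in[OF assms(1,2)]] assms(4)[rule_format, OF Max_in[OF assms(1,2)]]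
    by linarith
  finally show ?thesis .
qed

lemma card_Int_UN_intervals_le:
  fixes S Z :: "nat set"
  assumes "finite S" "0 < L" "\<forall>t\<in>S. card (Z \<inter> {t+1..t+L}) \<le> c"
  shows "L * card (Z \<inter> (\<Union>t\<in>S. {t+1..t+L})) \<le> 2 * c * card (\<Union>t\<in>S. {t+1..t+L})"
  using assms(1,3)
proof (induction S rule: finite_psubset_induct)
  case (psubset S)
  show ?case
  proof (cases "S = {}")
    case False
    let ?s = "Max S"
    define T where "T = {t\<in>S. t + L \<le> ?s}"
    let ?UT = "\<Union>t\<in>T. {t+1..t+L}" and ?UR = "\<Union>t\<in>S - T. {t+1..t+L}"
      and ?U = "\<Union>t\<in>S. {t+1..t+L}"
    have sS: "?s \<in> S" using False psubset.hyps by simp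
    have sR: "?s \<in> S - T" using sS assms(2) by (simp add: T_def)
    then have TS: "T \<subset> S" unfolding T_def by blast
    have "Max (S - T) = ?s" using psubset.hyps sR by (intro Max_eqI) auto
    have IH: "L * card (Z \<inter> ?UT) \<le> 2 * c * card ?UT"
      using psubset TS by (auto simp: T_def)
    have "card (Z \<inter> ?UR) \<le> 2 * c"
    proof (rule card_Int_UN_intervals_window)
      show "\<forall>t\<in>S - T. Max (S - T) < t + L"
        using \<open>Max (S - T) = ?s\<close> by (auto simp: T_def)
    qed (use psubset.hyps psubset.prems sR in auto)
    moreover have "?U = ?UT \<union> ?UR" using TS by blast
    then have "card (Z \<inter> ?U) \<le> card (Z \<inter> ?UT) + card (Z \<inter> ?UR)"
      by (simp add: Int_Un_distrib card_Un_le)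
    ultimately have zeros: "card (Z \<inter> ?U) \<le> card (Z \<inter> ?UT) + 2 * c" by linarith
    have "?UT \<inter> {?s+1..?s+L} = {}" by (auto simp: T_def)
    moreover have "?UT \<union> {?s+1..?s+L} \<subseteq> ?U" using sS TS by auto
    moreover have "finite ?UT" "finite ?U" using psubset.hyps TS finite_subset by auto
    ultimately have size: "card ?UT + L \<le> card ?U"
      using card_mono[of ?U "?UT \<union> {?s+1..?s+L}"] by (simp add: card_Un_disjoint)
    have "L * card (Z \<inter> ?U) \<le> L * card (Z \<inter> ?UT) + 2 * c * L"
      using mult_le_mono2[OF zeros, of L] by (simp add: algebra_simps)
    also have "\<dots> \<le> 2 * c * (card ?UT + L)" using IH by (simp add: algebra_simps)
    also have "\<dots> \<le> 2 * c * card ?U" using size by simp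
    finally show ?thesis .
  qed simp
qed

lemma card_Int_UN_separated_intervals_le:
  fixes S Z :: "nat set"
  assumes "finite S" "g \<le> P" "\<forall>t\<in>S. card (Z \<inter> {t+1..t+P}) \<le> c"
    "\<forall>t\<in>S. \<forall>t'\<in>S. t < t' \<longrightarrow> t + (P - g) \<le> t'"
  shows "(P - g) * card (Z \<inter> (\<Union>t\<in>S. {t+1..t+P})) \<le> c * card (\<Union>t\<in>S. {t+1..t+P})"
  using assms(1,3,4)
proof (induction S rule: finite_psubset_induct)
  case (psubset S)
  show ?case
  proof (cases "S = {}")
    case False
    let ?s = "Max S"
    let ?T = "S - {?s}"
    let ?UT = "\<Union>t\<in>?T. {t+1..t+P}" and ?U = "\<Union>t\<in>S. {t+1..t+P}"
    have sS: "?s \<in> S" using False psubset.hyps by simp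
    have IH: "(P - g) * card (Z \<inter> ?UT) \<le> c * card ?UT"
      using psubset sS by auto
    have U: "?U = ?UT \<union> {?s+1..?s+P}" using sS by blast
    then have "card (Z \<inter> ?U) \<le> card (Z \<inter> ?UT) + card (Z \<inter> {?s+1..?s+P})"
      by (simp add: Int_Un_distrib card_Un_le)
    then have zeros: "card (Z \<inter> ?U) \<le> card (Z \<inter> ?UT) + c"
      using psubset.prems(1) sS by fastforce
    have "?UT \<subseteq> {..?s + g}"
    proof
      fix x assume "x \<in> ?UT"
      then obtain t where t: "t \<in> S" "t \<noteq> ?s" "x \<in> {t+1..t+P}" by blast
      then have "t < ?s" using psubset.hyps by (simp add: order_less_le)
      then have "t + (P - g) \<le> ?s" using psubset.prems(2) t(1) sS by blast
      then show "x \<in> {..?s + g}" using t(3) assms(2) by auto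
    qed
    then have "?UT \<inter> {?s+g+1..?s+P} = {}" by auto
    moreover have "?UT \<union> {?s+g+1..?s+P} \<subseteq> ?U" using U by auto
    moreover have "finite ?UT" using psubset.hyps by simp
    ultimately have size: "card ?UT + (P - g) \<le> card ?U"
      using card_mono[of ?U "?UT \<union> {?s+g+1..?s+P}"] assms(2) U by (simp add: card_Un_disjoint)
    have "(P - g) * card (Z \<inter> ?U) \<le> (P - g) * card (Z \<inter> ?UT) + c * (P - g)"
      using mult_le_mono2[OF zeros, of "P - g"] by (simp add: algebra_simps)
    also have "\<dots> \<le> c * (card ?UT + (P - g))" using IH by (simp add: algebra_simps)
    also have "\<dots> \<le> c * card ?U" using size by simp
    finally show ?thesis .
  qed simp
qed

lemma UN_intervals_split:
  fixes S :: "nat set"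
  assumes "0 < P"
  shows "(\<Union>t\<in>S. {t+1..t + m * P}) = (\<Union>t\<in>{t + j * P |t j. t \<in> S \<and> j < m}. {t+1..t+P})"
proof (intro equalityI subsetI)
  fix x assume "x \<in> (\<Union>t\<in>S. {t+1..t + m * P})"
  then obtain t where t: "t \<in> S" "t + 1 \<le> x" "x \<le> t + m * P" by auto
  define j where "j = (x - t - 1) div P"
  define r where "r = (x - t - 1) mod P"
  have x: "x - t - 1 = j * P + r" and r: "r < P" using assms by (simp_all add: j_def r_def)
  have "j * P < m * P" using x t by linarith
  then have "j < m" by simp
  then show "x \<in> (\<Union>t\<in>{t + j * P |t j. t \<in> S \<and> j < m}. {t+1..t+P})"
    using t x r by (intro UN_I[of "t + j * P"]) auto
next
  fix x assume "x \<in> (\<Union>t\<in>{t + j * P |t j. t \<in> S \<and> j < m}. {t+1..t+P})"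
  then obtain t j where tj: "t \<in> S" "j < m" "x \<in> {t + j * P + 1..t + j * P + P}" by auto
  have "j * P + P \<le> m * P" using tj(2) by (metis Suc_leI add.commute mult_Suc mult_le_mono1)
  then show "x \<in> (\<Union>t\<in>S. {t+1..t + m * P})" using tj by (intro UN_I[of t]) auto
qed

lemma card_eq_sum_rows:
  fixes X :: "(nat \<times> nat) set"
  assumes "finite X" "finite Y" "snd ` X \<subseteq> Y"
  shows "card X = (\<Sum>y\<in>Y. card {x. (x, y) \<in> X})"
proof -
  have X: "X = (\<Union>y\<in>Y. (\<lambda>x. (x, y)) ` {x. (x, y) \<in> X})" using assms(3) by force
  have fin: "finite {x. (x, y) \<in> X}" for y
    by (rule finite_subset[of _ "fst ` X"]) (use assms(1) in force)+
  have "card X = (\<Sum>y\<in>Y. card ((\<lambda>x. (x, y)) ` {x. (x, y) \<in> X}))"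
    by (subst X, rule card_UN_disjoint) (use assms(2) fin in auto)
  also have "\<dots> = (\<Sum>y\<in>Y. card {x. (x, y) \<in> X})"
    by (rule sum.cong) (auto simp: card_image inj_on_def)
  finally show ?thesis .
qed

lemma card_le_by_rows:
  fixes Z U :: "(nat \<times> nat) set"
  assumes "finite U" "Z \<subseteq> U" "\<And>y. a * card {x. (x, y) \<in> Z} \<le> b * card {x. (x, y) \<in> U}"
  shows "a * card Z \<le> b * card U"
proof -
  have "card Z = (\<Sum>y\<in>snd ` U. card {x. (x, y) \<in> Z})"
    by (rule card_eq_sum_rows) (use assms(1,2) finite_subset in auto)
  then have "a * card Z = (\<Sum>y\<in>snd ` U. a * card {x. (x, y) \<in> Z})"
    by (simp add: sum_distrib_left)
  also have "\<dots> \<le> (\<Sum>y\<in>snd ` U. b * card {x. (x, y) \<in> U})"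
    by (intro sum_mono assms(3))
  also have "\<dots> = b * card U"
    using card_eq_sum_rows[OF assms(1) _ subset_refl] assms(1) by (simp add: sum_distrib_left)
  finally show ?thesis .
qed

definition squares :: "(nat \<times> nat) set \<Rightarrow> nat \<Rightarrow> (nat \<times> nat) set" where
  "squares I L = (\<Union>u\<in>I. {(fst u + i, snd u + j) | i j. i \<in> {1..L} \<and> j \<in> {1..L}})"

lemma mem_squares:
  "v \<in> squares I L \<longleftrightarrow> (\<exists>u\<in>I. \<exists>i\<in>{1..L}. \<exists>j\<in>{1..L}. v = (fst u + i, snd u + j))"
  unfolding squares_def by blast

lemma Jset_eq_squares: "Jset Q n p L = squares (Iset Q n p L) L"
  by (simp add: Jset_def squares_def)

lemma finite_Iset: "finite (Iset Q n p L)"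
  by (rule finite_subset[of _ "{0..n-L} \<times> {0..n-L}"]) (auto simp: Iset_def)

lemma finite_squares: "finite I \<Longrightarrow> finite (squares I L)"
proof -
  assume "finite I"
  moreover have "{(fst u + i, snd u + j) | i j. i \<in> {1..L} \<and> j \<in> {1..L}}
      = (\<lambda>(i, j). (fst u + i, snd u + j)) ` ({1..L} \<times> {1..L})" for u :: "nat \<times> nat"
    by auto
  ultimately show ?thesis unfolding squares_def by auto
qed

lemma finite_Jset: "finite (Jset Q n p L)"
  unfolding Jset_eq_squares by (intro finite_squares finite_Iset)

definition row_starts :: "(nat \<times> nat) set \<Rightarrow> nat \<Rightarrow> nat \<Rightarrow> nat set" where
  "row_starts I L y = {fst u |u. u \<in> I \<and> snd u < y \<and> y \<le> snd u + L}"

lemma finite_row_starts: "finite I \<Longrightarrow> finite (row_starts I L y)"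
  unfolding row_starts_def by (rule finite_subset[of _ "fst ` I"]) force+

lemma row_squares: "{x. (x, y) \<in> squares I L} = (\<Union>t\<in>row_starts I L y. {t+1..t+L})"
  unfolding row_starts_def
proof (intro equalityI subsetI)
  fix x assume "x \<in> {x. (x, y) \<in> squares I L}"
  then obtain u i j where u: "u \<in> I" "i \<in> {1..L}" "j \<in> {1..L}" "x = fst u + i" "y = snd u + j"
    by (auto simp: squares_def)
  then have "fst u \<in> {fst u |u. u \<in> I \<and> snd u < y \<and> y \<le> snd u + L}"
    by (intro CollectI exI[of _ u]) auto
  with u show "x \<in> (\<Union>t\<in>{fst u |u. u \<in> I \<and> snd u < y \<and> y \<le> snd u + L}. {t+1..t+L})"
    by (intro UN_I[of "fst u"]) auto
next
  fix x assume "x \<in> (\<Union>t\<in>{fst u |u. u \<in> I \<and> snd u < y \<and> y \<le> snd u + L}. {t+1..t+L})"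
  then obtain u where u: "u \<in> I" "snd u < y" "y \<le> snd u + L" "x \<in> {fst u+1..fst u+L}" by auto
  then have "(x, y) = (fst u + (x - fst u), snd u + (y - snd u))"
    "x - fst u \<in> {1..L}" "y - snd u \<in> {1..L}" by auto
  then show "x \<in> {x. (x, y) \<in> squares I L}"
    using u(1) unfolding squares_def by blast
qed

lemma mem_Iset_lift2:
  "u \<in> Iset (lift2 W L) n p L \<longleftrightarrow> u \<in> {0..n-L} \<times> {0..n-L} \<and>
     (\<exists>w\<in>W. \<forall>i\<in>{1..L}. \<forall>j\<in>{1..L}. p (fst u + i, snd u + j) = w ! (i - 1))"
proof
  assume "u \<in> Iset (lift2 W L) n p L"
  then obtain q w where "u \<in> {0..n-L} \<times> {0..n-L}" "w \<in> W"
    "\<forall>i\<in>{1..L}. \<forall>j\<in>{1..L}. p (fst u + i, snd u + j) = q (i, j)"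
    "\<forall>i\<in>{1..L}. \<forall>j\<in>{1..L}. q (i, j) = w ! (i - 1)"
    unfolding Iset_def lift2_def by blast
  then show "u \<in> {0..n-L} \<times> {0..n-L} \<and>
     (\<exists>w\<in>W. \<forall>i\<in>{1..L}. \<forall>j\<in>{1..L}. p (fst u + i, snd u + j) = w ! (i - 1))"
    by auto
next
  assume "u \<in> {0..n-L} \<times> {0..n-L} \<and>
     (\<exists>w\<in>W. \<forall>i\<in>{1..L}. \<forall>j\<in>{1..L}. p (fst u + i, snd u + j) = w ! (i - 1))"
  then obtain w where "u \<in> {0..n-L} \<times> {0..n-L}" "w \<in> W"
    "\<forall>i\<in>{1..L}. \<forall>j\<in>{1..L}. p (fst u + i, snd u + j) = w ! (i - 1)"
    by blast
  moreover have "(\<lambda>(i, j). w ! (i - 1)) \<in> lift2 W L"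
    using \<open>w \<in> W\<close> unfolding lift2_def by auto
  ultimately show "u \<in> Iset (lift2 W L) n p L"
    unfolding Iset_def by (intro CollectI conjI bexI[of _ "\<lambda>(i, j). w ! (i - 1)"]) auto
qed

lemma occurs_at_row_Iset_lift2:
  assumes "u \<in> Iset (lift2 W L) n p L" "snd u < y" "y \<le> snd u + L" "\<forall>w\<in>W. length w = L"
  obtains w where "w \<in> W" "occurs_at (\<lambda>x. p (x, y)) (fst u) w"
proof -
  obtain w where w: "w \<in> W" "\<forall>i\<in>{1..L}. \<forall>j\<in>{1..L}. p (fst u + i, snd u + j) = w ! (i - 1)"
    using assms(1) unfolding mem_Iset_lift2 by blast
  have "occurs_at (\<lambda>x. p (x, y)) (fst u) w"
    unfolding occurs_at_def
  proof (intro allI impI)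
    fix i assume "i < length w"
    then have "Suc i \<in> {1..L}" "y - snd u \<in> {1..L}" using w(1) assms(2-4) by auto
    then show "p (fst u + Suc i, y) = w ! i" using w(2) assms(2) by force
  qed
  with w(1) show thesis by (rule that)
qed

lemma Jset_lift2_mono: "W \<subseteq> W' \<Longrightarrow> Jset (lift2 W L) n p L \<subseteq> Jset (lift2 W' L) n p L"
proof -
  assume "W \<subseteq> W'"
  then have "Iset (lift2 W L) n p L \<subseteq> Iset (lift2 W' L) n p L"
    unfolding mem_Iset_lift2 subset_iff by blast
  then show ?thesis unfolding Jset_eq_squares mem_squares subset_iff by blast
qed

lemma Jset_lift2_insert_replicate:
  assumes "v \<in> Jset (lift2 (insert (replicate L a) W) L) n p L" "p v \<noteq> a"
  shows "v \<in> Jset (lift2 W L) n p L"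
proof -
  obtain u i j where u: "u \<in> Iset (lift2 (insert (replicate L a) W) L) n p L"
    "i \<in> {1..L}" "j \<in> {1..L}" "v = (fst u + i, snd u + j)"
    using assms(1) unfolding Jset_eq_squares mem_squares by blast
  then obtain w where w: "u \<in> {0..n-L} \<times> {0..n-L}" "w \<in> insert (replicate L a) W"
    "\<forall>i\<in>{1..L}. \<forall>j\<in>{1..L}. p (fst u + i, snd u + j) = w ! (i - 1)"
    unfolding mem_Iset_lift2 by blast
  have "w \<noteq> replicate L a" using u(2-4) w(3) assms(2) by auto
  with w have "u \<in> Iset (lift2 W L) n p L" unfolding mem_Iset_lift2 by blast
  with u(2-4) show ?thesis unfolding Jset_eq_squares mem_squares by blast
qed

lemma card_symbol_Jset_lift2_le:
  assumes "0 < L" "\<forall>w\<in>W. length w = L \<and> count_list w a \<le> c"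
  shows "L * card {v \<in> Jset (lift2 W L) n p L. p v = a} \<le> 2 * c * card (Jset (lift2 W L) n p L)"
proof (rule card_le_by_rows)
  let ?I = "Iset (lift2 W L) n p L"
  show "finite (Jset (lift2 W L) n p L)" by (rule finite_Jset)
  fix y
  let ?S = "row_starts ?I L y"
  have row: "{x. (x, y) \<in> Jset (lift2 W L) n p L} = (\<Union>t\<in>?S. {t+1..t+L})"
    unfolding Jset_eq_squares by (rule row_squares)
  have finS: "finite ?S" by (intro finite_row_starts finite_Iset)
  have zeros: "\<forall>t\<in>?S. card ({x. p (x, y) = a} \<inter> {t+1..t+L}) \<le> c"
  proof
    fix t assume "t \<in> ?S"
    then obtain u where u: "u \<in> ?I" "snd u < y" "y \<le> snd u + L" "t = fst u"
      unfolding row_starts_def by blast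
    obtain w where "w \<in> W" "occurs_at (\<lambda>x. p (x, y)) t w"
      using occurs_at_row_Iset_lift2[OF u(1-3)] assms(2) u(4) by blast
    then show "card ({x. p (x, y) = a} \<inter> {t+1..t+L}) \<le> c"
      using card_occurs_at[of "\<lambda>x. p (x, y)" t w a] assms(2) by auto
  qed
  have "{x. (x, y) \<in> {v \<in> Jset (lift2 W L) n p L. p v = a}}
      = {x. p (x, y) = a} \<inter> (\<Union>t\<in>?S. {t+1..t+L})"
    using row by blast
  with card_Int_UN_intervals_le[OF finS assms(1) zeros]
  show "L * card {x. (x, y) \<in> {v \<in> Jset (lift2 W L) n p L. p v = a}}
      \<le> 2 * c * card {x. (x, y) \<in> Jset (lift2 W L) n p L}"
    unfolding row by simp
qed auto

lemma card_symbol_Jset_lift2_padded_le: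
  fixes xs :: "nat list" and m :: nat
  assumes "xs \<noteq> []" "xs ! 0 \<noteq> e" "length xs \<le> M"
  defines "b \<equiv> xs @ replicate M e @ xs"
  defines "W \<equiv> {concat (replicate m b)}" and "L \<equiv> m * length b"
  shows "(length b - length xs) * card {v \<in> Jset (lift2 W L) n p L. p v = a}
    \<le> count_list b a * card (Jset (lift2 W L) n p L)"
proof (rule card_le_by_rows)
  let ?I = "Iset (lift2 W L) n p L" and ?P = "length b"
  show "finite (Jset (lift2 W L) n p L)" by (rule finite_Jset)
  fix y
  let ?S = "row_starts ?I L y"
  let ?S' = "{t + j * ?P |t j. t \<in> ?S \<and> j < m}"
  have "0 < ?P" using assms(1) by (simp add: b_def)
  then have row: "{x. (x, y) \<in> Jset (lift2 W L) n p L} = (\<Union>t\<in>?S'. {t+1..t+?P})"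
    unfolding Jset_eq_squares row_squares L_def by (rule UN_intervals_split)
  have "finite ?S" by (intro finite_row_starts finite_Iset)
  moreover have "?S' = (\<lambda>(t, j). t + j * ?P) ` (?S \<times> {..<m})" by auto
  ultimately have finS': "finite ?S'" by simp
  have occ: "occurs_at (\<lambda>x. p (x, y)) t b" if "t \<in> ?S'" for t
  proof -
    obtain u j where u: "u \<in> ?I" "snd u < y" "y \<le> snd u + L" "j < m" "t = fst u + j * ?P"
      using \<open>t \<in> ?S'\<close> unfolding row_starts_def by blast
    have "occurs_at (\<lambda>x. p (x, y)) (fst u) (concat (replicate m b))"
      using occurs_at_row_Iset_lift2[OF u(1-3)]
      by (auto simp: W_def L_def length_concat sum_list_replicate)
    then show ?thesis using u(4,5) by (simp add: occurs_at_concat_replicate)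
  qed
  have zeros: "\<forall>t\<in>?S'. card ({x. p (x, y) = a} \<inter> {t+1..t+?P}) \<le> count_list b a"
    using card_occurs_at[OF occ] by simp
  have sep: "\<forall>t\<in>?S'. \<forall>t'\<in>?S'. t < t' \<longrightarrow> t + (?P - length xs) \<le> t'"
  proof (intro ballI impI)
    fix t t' assume "t \<in> ?S'" "t' \<in> ?S'" "t < t'"
    with occ[of t] occ[of t'] have "t + (length xs + M) \<le> t'"
      unfolding b_def using assms(1-3) by (intro occurs_at_padded_separated)
    then show "t + (?P - length xs) \<le> t'" by (simp add: b_def)
  qed
  have "{x. (x, y) \<in> {v \<in> Jset (lift2 W L) n p L. p v = a}}
      = {x. p (x, y) = a} \<inter> (\<Union>t\<in>?S'. {t+1..t+?P})"
    using row by blast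
  with card_Int_UN_separated_intervals_le[OF finS' _ zeros sep]
  show "(?P - length xs) * card {x. (x, y) \<in> {v \<in> Jset (lift2 W L) n p L. p v = a}}
      \<le> count_list b a * card {x. (x, y) \<in> Jset (lift2 W L) n p L}"
    unfolding row by (simp add: b_def)
qed auto

lemma length_count_At':
  assumes "\<forall>m\<ge>1. 2 \<le> N m" "1 \<le> N' k"
  shows "\<forall>w\<in>At' N N' k. length w = ell' N N' k \<and> count_list w 0 \<le> count_list (aw N (k-1)) 0"
proof -
  have "ell N (k-1) + (N' k - 1) * ell N (k-1) = N' k * ell N (k-1)"
    using assms(2) by (cases "N' k") auto
  then show ?thesis
    using length_aw_bw[OF assms(1)] by (auto simp: At'_def ell'_def count_list_0_iff)
qed

lemma card_KA_mult_le:
  assumes "\<forall>m\<ge>1. 2 \<le> N m" "1 \<le> N' k"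
  shows "ell' N N' k * card (KA N N' k n p) \<le> 2 * count_list (aw N (k-1)) 0 * card (JA N N' k n p)"
proof -
  have "0 < ell N (k-1)" by (rule ell_pos) (use assms(1) in auto)
  then show ?thesis
    unfolding KA_def JA_def
    using card_symbol_Jset_lift2_le[OF _ length_count_At'[of N N' k, OF assms]] assms(2) by (simp add: ell'_def)
qed

lemma card_KA_le:
  assumes "\<forall>m\<ge>1. 2 \<le> N m" "1 \<le> N' k"
  shows "real (card (KA N N' k n p)) \<le> 2 / real (N' k) * real (card (JA N N' k n p)) * fA N (k-1)"
proof -
  let ?P = "ell N (k-1)" and ?c = "count_list (aw N (k-1)) 0"
  have "real (N' k * ?P * card (KA N N' k n p)) \<le> real (2 * ?c * card (JA N N' k n p))"
    using card_KA_mult_le[of N N' k n p, OF assms] unfolding ell'_def by (rule of_nat_mono)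
  moreover have "0 < ?P" by (rule ell_pos) (use assms(1) in auto)
  then have "0 < real (N' k) * real ?P" using assms(2) by simp
  ultimately show ?thesis
    by (simp add: fA_def pos_le_divide_eq mult.commute mult.left_commute)
qed

lemma card_KB_mult_le:
  assumes "\<forall>m\<ge>1. 3 \<le> N m" "even k" "2 \<le> k"
  shows "(ell N (k-1) - ell N (k-2)) * card (KB N N' k n p) \<le> count_list (bw N (k-1)) 0 * card (JB N N' k n p)"
proof -
  let ?j = "k - 2"
  let ?beta = "bw N ?j" and ?M = "(N (k-1) - 2) * ell N ?j" and ?b = "bw N (k-1)"
  let ?L = "ell' N N' k" and ?c = "count_list (bw N (k-1)) 0"
  let ?Jb = "Jset (lift2 {concat (replicate (N' k) ?b)} ?L) n p ?L"
  have k: "k - 1 = Suc ?j" "odd (Suc ?j)" using assms(2,3) by auto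
  have N: "\<forall>m\<ge>1. 2 \<le> N m" "\<forall>m\<ge>1. 1 \<le> N m" "3 \<le> N (k-1)" using assms by auto
  have b: "?b = ?beta @ replicate ?M 2 @ ?beta" using bw_Suc_odd[OF k(2)] k(1) by simp
  have beta: "?beta \<noteq> []" "?beta ! 0 \<noteq> 2" using bw_not_Nil_nth_0[OF N(2)] by auto
  have l: "length ?beta = ell N ?j" "length ?b = ell N (k-1)" using length_aw_bw[OF N(1)] by auto
  have "1 * ell N ?j \<le> ?M" using N(3) by (intro mult_le_mono1) simp
  then have "length ?beta \<le> ?M" using l(1) by simp
  have L: "?L = N' k * length ?b" using l(2) by (simp add: ell'_def)
  have "{v \<in> Jset (lift2 (Bt' N N' k) ?L) n p ?L. p v = 0} \<subseteq> {v \<in> ?Jb. p v = 0}"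
    unfolding Bt'_def insert_commute[of "concat (replicate (N' k) ?b)"]
    by (auto intro: Jset_lift2_insert_replicate)
  then have "card (KB N N' k n p) \<le> card {v \<in> ?Jb. p v = 0}"
    unfolding KB_def JB_def by (intro card_mono) (simp_all add: finite_Jset)
  then have "(length ?b - length ?beta) * card (KB N N' k n p)
      \<le> (length ?b - length ?beta) * card {v \<in> ?Jb. p v = 0}"
    by (rule mult_le_mono2)
  also have "\<dots> \<le> ?c * card ?Jb"
    using card_symbol_Jset_lift2_padded_le[OF beta \<open>length ?beta \<le> ?M\<close>, of "N' k" n p 0]
    unfolding b[symmetric] L by simp
  also have "\<dots> \<le> ?c * card (JB N N' k n p)"
    unfolding JB_def by (intro mult_le_mono2 card_mono finite_Jset Jset_lift2_mono) (simp add: Bt'_def)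
  finally show ?thesis unfolding l .
qed

lemma card_KB_le:
  assumes "\<forall>m\<ge>1. 3 \<le> N m" "even k" "2 \<le> k"
  shows "real (card (KB N N' k n p))
    \<le> inverse (1 - 1 / real (N (k-1))) * real (card (JB N N' k n p)) * fB N (k-1)"
proof -
  let ?N = "N (k-1)" and ?l = "ell N (k-2)" and ?c = "count_list (bw N (k-1)) 0"
  have "k - 1 = Suc (k - 2)" using assms(3) by simp
  then have e: "ell N (k-1) = ?N * ?l" using ell.simps(2)[of N "k - 2"] by simp
  have "0 < ?l" by (rule ell_pos) (use assms(1) in auto)
  then have N: "3 \<le> ?N" "0 < ?l" using assms(1,3) by simp_all
  have "real ((?N - 1) * ?l * card (KB N N' k n p)) \<le> real (?c * card (JB N N' k n p))"
    using card_KB_mult_le[OF assms] unfolding e by (intro of_nat_mono) (simp add: diff_mult_distrib)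
  then have "(real ?N - 1) * real ?l * real (card (KB N N' k n p)) \<le> real ?c * real (card (JB N N' k n p))"
    using N(1) by (simp add: of_nat_diff)
  moreover have "0 < (real ?N - 1) * real ?l" using N by simp
  moreover have "inverse (1 - 1 / real ?N) * real (card (JB N N' k n p)) * fB N (k-1)
      = real ?c * real (card (JB N N' k n p)) / ((real ?N - 1) * real ?l)"
    using N unfolding fB_def e by (simp add: field_simps)
  ultimately show ?thesis by (simp add: pos_le_divide_eq mult.commute)
qed

theorem lemma3p6:
  fixes N N' :: "nat \<Rightarrow> nat" and k n :: nat and p :: "nat \<times> nat \<Rightarrow> nat"
  assumes hN: "\<forall>m\<ge>1. N m \<ge> 4"
    and hN'2: "\<forall>m\<ge>1. N' m \<ge> 2"
    and hdvd: "\<forall>m\<ge>1. N' m dvd N m"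
    and hratio: "\<forall>m\<ge>1. N m div N' m \<ge> 2"
    and hk: "even k" "k \<ge> 2"
    and hn: "n > 2 * ell' N N' k"
    and hp: "\<forall>v \<in> {1..n} \<times> {1..n}. p v \<in> {0,1,2}"
  shows "(real (card (KB N N' k n p))
           \<le> inverse (1 - 1 / real (N (k-1))) * real (card (JB N N' k n p)) * fB N (k-1))
         \<and> (real (card (KA N N' k n p))
           \<le> 2 / real (N' k) * real (card (JA N N' k n p)) * fA N (k-1))"
proof
  have "\<forall>m\<ge>1. 3 \<le> N m" using hN by auto
  then show "real (card (KB N N' k n p))
      \<le> inverse (1 - 1 / real (N (k-1))) * real (card (JB N N' k n p)) * fB N (k-1)"
    using hk by (rule card_KB_le)
  have "\<forall>m\<ge>1. 2 \<le> N m" "1 \<le> N' k" using hN hN'2[rule_format, of k] hk by auto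
  then show "real (card (KA N N' k n p))
      \<le> 2 / real (N' k) * real (card (JA N N' k n p)) * fA N (k-1)"
    by (rule card_KA_le)
qed

end
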